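(* Let $I$ be an ideal in $P=\mathbb{Q}[x_1,\dots,x_n]$, let $\Delta(I)$ be its universal denominator, and let $p$ be a prime not dividing $\Delta(I)$. Then the ideal $I_{(p,\sigma)}\subseteq\mathbb{F}_p[x_1,\dots,x_n]$ does not depend on the term ordering $\sigma$ on $\mathbb{T}^n$.
   Context: $\mathbb{T}^n$ is the monoid of power-products in $x_1,\dots,x_n$. For $f\in P$, $\operatorname{den}(f)$ is the positive least common multiple of the denominators of the coefficients of $f$ (with $\operatorname{den}(0)=1$); for a set $F$, $\operatorname{den}(F)$ is the lcm of the $\operatorname{den}(f)$, $f\in F$. For a term ordering $\sigma$ with $G_\sigma$ the reduced $\sigma$-Gröbner basis of $I$, set $\operatorname{den}_\sigma(I)=\operatorname{den}(G_\sigma)$. Since an ideal has only finitely many distinct reduced Gröbner bases (finiteness of the Gröbner fan), the universal denominator $\Delta(I)$, defined as the least common multiple of all $\operatorname{den}_\sigma(I)$ as $\sigma$ ranges over all term orderings, is a well-defined positive integer. For a prime $p\nmid\operatorname{den}_\sigma(I)$, $\pi_p$ denotes coefficientwise reduction modulo $p$ and $I_{(p,\sigma)}$ is the ideal of $\mathbb{F}_p[x_1,\dots,x_n]$ generated by $\pi_p(G_\sigma)$. *)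

theory Defs
  imports "HOL-Library.Poly_Mapping" "Berlekamp_Zassenhaus.Finite_Field"
begin

text \<open>Power-products in x_0..x_(n-1): exponent vectors nat =>0 nat with keys below n.
 Polynomials with coefficients in 'a: (nat =>0 nat) =>0 'a.\<close>

type_synonym pp = "nat \<Rightarrow>\<^sub>0 nat"
type_synonym 'a mpoly = "pp \<Rightarrow>\<^sub>0 'a"

definition PP :: "nat \<Rightarrow> pp set" where
  "PP n = {t. Poly_Mapping.keys t \<subseteq> {..<n}}"

definition Polys :: "nat \<Rightarrow> ('a::zero) mpoly set" where
  "Polys n = {f. Poly_Mapping.keys f \<subseteq> PP n}"

definition pp_dvd :: "pp \<Rightarrow> pp \<Rightarrow> bool" where
  "pp_dvd s t \<longleftrightarrow> (\<exists>u. t = s + u)"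

definition term_order :: "nat \<Rightarrow> (pp \<Rightarrow> pp \<Rightarrow> bool) \<Rightarrow> bool" where
  "term_order n ordr \<longleftrightarrow>
     (\<forall>s\<in>PP n. ordr s s) \<and>
     (\<forall>s\<in>PP n. \<forall>t\<in>PP n. ordr s t \<and> ordr t s \<longrightarrow> s = t) \<and>
     (\<forall>s\<in>PP n. \<forall>t\<in>PP n. \<forall>u\<in>PP n. ordr s t \<and> ordr t u \<longrightarrow> ordr s u) \<and>
     (\<forall>s\<in>PP n. \<forall>t\<in>PP n. ordr s t \<or> ordr t s) \<and>
     (\<forall>t\<in>PP n. ordr 0 t) \<and>
     (\<forall>s\<in>PP n. \<forall>t\<in>PP n. \<forall>u\<in>PP n. ordr s t \<longrightarrow> ordr (s + u) (t + u))"

text \<open>Leading term w.r.t. the ordering (meaningful for f ~= 0).\<close>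
definition lterm :: "(pp \<Rightarrow> pp \<Rightarrow> bool) \<Rightarrow> ('a::zero) mpoly \<Rightarrow> pp" where
  "lterm ordr f = (THE t. t \<in> Poly_Mapping.keys f \<and> (\<forall>s\<in>Poly_Mapping.keys f. ordr s t))"

definition lcoeff :: "(pp \<Rightarrow> pp \<Rightarrow> bool) \<Rightarrow> ('a::zero) mpoly \<Rightarrow> 'a" where
  "lcoeff ordr f = Poly_Mapping.lookup f (lterm ordr f)"

definition ideal_gen :: "nat \<Rightarrow> ('a::comm_ring_1) mpoly set \<Rightarrow> 'a mpoly set" where
  "ideal_gen n F = {f. \<exists>A q. finite A \<and> A \<subseteq> F \<and> (\<forall>g\<in>A. q g \<in> Polys n) \<and>
                          f = (\<Sum>g\<in>A. q g * g)}"

definition is_ideal :: "nat \<Rightarrow> ('a::comm_ring_1) mpoly set \<Rightarrow> bool" where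
  "is_ideal n I \<longleftrightarrow> I \<subseteq> Polys n \<and> 0 \<in> I \<and> (\<forall>f\<in>I. \<forall>g\<in>I. f + g \<in> I) \<and>
                     (\<forall>f\<in>I. \<forall>q\<in>Polys n. q * f \<in> I)"

definition reduced_GB :: "nat \<Rightarrow> (pp \<Rightarrow> pp \<Rightarrow> bool) \<Rightarrow> ('a::field) mpoly set \<Rightarrow> 'a mpoly set \<Rightarrow> bool" where
  "reduced_GB n ordr I G \<longleftrightarrow>
     finite G \<and> G \<subseteq> I \<and> 0 \<notin> G \<and> ideal_gen n G = I \<and>
     (\<forall>f\<in>I. f \<noteq> 0 \<longrightarrow> (\<exists>g\<in>G. pp_dvd (lterm ordr g) (lterm ordr f))) \<and>
     (\<forall>g\<in>G. lcoeff ordr g = 1) \<and>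
     (\<forall>g\<in>G. \<forall>t\<in>Poly_Mapping.keys g. \<forall>h\<in>G. (h \<noteq> g \<or> t \<noteq> lterm ordr g) \<longrightarrow> \<not> pp_dvd (lterm ordr h) t)"

definition den :: "rat mpoly \<Rightarrow> nat" where
  "den f = Lcm ((\<lambda>c. nat (snd (quotient_of c))) ` (Poly_Mapping.lookup f ` Poly_Mapping.keys f))"

definition den_set :: "rat mpoly set \<Rightarrow> nat" where
  "den_set F = Lcm (den ` F)"

definition univ_den :: "nat \<Rightarrow> rat mpoly set \<Rightarrow> nat" where
  "univ_den n I = Lcm {den_set G | ordr G. term_order n ordr \<and> reduced_GB n ordr I G}"

text \<open>Coefficientwise reduction modulo p = CARD('p) (for coefficients whose denominator
 is prime to p).\<close>
definition red_coeff :: "rat \<Rightarrow> ('p::prime_card) mod_ring" where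
  "red_coeff c = (case quotient_of c of (a, b) \<Rightarrow> of_int a / of_int b)"

definition red_poly :: "rat mpoly \<Rightarrow> ('p::prime_card) mod_ring mpoly" where
  "red_poly f = Poly_Mapping.map red_coeff f"

end

theory Submission
  imports Defs
begin

text \<open>If p does not divide \<open>\<Delta>(I)\<close>, every reduced Groebner basis of I has p-integral
coefficients. For such a basis G, dividing a p-integral element f of I by G only subtracts
multiples \<open>c t g\<close> with g monic and c a coefficient of the current remainder, so all remainders
stay p-integral and reduction mod p commutes with each division step; since term orders are
well-founded (Dickson's lemma) the division terminates, whence \<open>\<pi>\<^sub>p(f)\<close> lies in the ideal
generated by \<open>\<pi>\<^sub>p(G)\<close>. Applying this to the elements of a second reduced basis H, and
symmetrically, gives the equality of the two reduced ideals.\<close>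

section \<open>p-integral rationals and reduction modulo p\<close>

definition p_integral :: "nat \<Rightarrow> rat \<Rightarrow> bool" where
  "p_integral p c \<longleftrightarrow> (\<exists>a b. \<not> int p dvd b \<and> c = of_int a / of_int b)"

definition p_integral_poly :: "nat \<Rightarrow> rat mpoly \<Rightarrow> bool" where
  "p_integral_poly p f \<longleftrightarrow> (\<forall>s. p_integral p (Poly_Mapping.lookup f s))"

lemma of_int_mod_ring_eq_0_iff:
  "(of_int b :: 'p::prime_card mod_ring) = 0 \<longleftrightarrow> int CARD('p) dvd b"
  by (simp add: of_int_eq_0_iff_char_dvd)

lemma red_coeff_frac:
  assumes "\<not> int CARD('p::prime_card) dvd b"
  shows "(red_coeff (of_int a / of_int b) :: 'p mod_ring) = of_int a / of_int b"
proof -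
  obtain a' b' where q: "quotient_of (of_int a / of_int b) = (a', b')"
    by (cases "quotient_of (of_int a / of_int b :: rat)")
  have "b \<noteq> 0" using assms by auto
  have "b' > 0" and "coprime a' b'"
    using q quotient_of_denom_pos quotient_of_coprime by blast+
  have "(of_int a / of_int b :: rat) = of_int a' / of_int b'"
    using q quotient_of_div by blast
  with \<open>b \<noteq> 0\<close> \<open>b' > 0\<close> have cross: "a' * b = a * b'"
    by (simp add: field_simps) (metis of_int_eq_iff of_int_mult)
  \<comment> \<open>the reduced denominator divides every denominator\<close>
  then have "b' dvd b"
    using \<open>coprime a' b'\<close> by (metis coprime_commute coprime_dvd_mult_right_iff dvd_triv_right)
  with assms have "(of_int b' :: 'p mod_ring) \<noteq> 0" "(of_int b :: 'p mod_ring) \<noteq> 0"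
    by (auto simp: of_int_mod_ring_eq_0_iff dest: dvd_trans)
  moreover have "(of_int a' * of_int b :: 'p mod_ring) = of_int a * of_int b'"
    by (metis cross of_int_mult)
  ultimately show ?thesis
    using q by (simp add: red_coeff_def field_simps)
qed

lemma p_integral_0: "p_integral CARD('p::prime_card) 0"
  and red_coeff_0: "(red_coeff 0 :: 'p mod_ring) = 0"
proof -
  have "\<not> int CARD('p) dvd 1"
    using prime_card_int[where 'a='p] by (simp add: prime_int_iff)
  then show "p_integral CARD('p) 0"
    unfolding p_integral_def by (metis div_0 of_int_0)
  show "(red_coeff 0 :: 'p mod_ring) = 0"
    by (simp add: red_coeff_def)
qed

lemma p_integral_diff:
  assumes "p_integral CARD('p::prime_card) x" "p_integral CARD('p) y"
  shows "p_integral CARD('p) (x - y)"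
    and "(red_coeff (x - y) :: 'p mod_ring) = red_coeff x - red_coeff y"
proof -
  obtain a b a' b' where b: "\<not> int CARD('p) dvd b" "x = of_int a / of_int b"
    and b': "\<not> int CARD('p) dvd b'" "y = of_int a' / of_int b'"
    using assms unfolding p_integral_def by blast
  have bb': "\<not> int CARD('p) dvd (b * b')"
    using b b' prime_card_int[where 'a='p] prime_dvd_mult_iff by blast
  have "b \<noteq> 0" "b' \<noteq> 0"
    using b(1) b'(1) by auto
  then have xy: "x - y = of_int (a * b' - a' * b) / of_int (b * b')"
    unfolding b(2) b'(2) by (simp add: diff_frac_eq)
  with bb' show "p_integral CARD('p) (x - y)"
    unfolding p_integral_def by blast
  have "(of_int b :: 'p mod_ring) \<noteq> 0" "(of_int b' :: 'p mod_ring) \<noteq> 0"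
    using b b' by (simp_all add: of_int_mod_ring_eq_0_iff)
  then show "(red_coeff (x - y) :: 'p mod_ring) = red_coeff x - red_coeff y"
    unfolding xy red_coeff_frac[OF bb'] using b b' by (simp add: red_coeff_frac field_simps)
qed

lemma p_integral_mult:
  assumes "p_integral CARD('p::prime_card) x" "p_integral CARD('p) y"
  shows "p_integral CARD('p) (x * y)"
    and "(red_coeff (x * y) :: 'p mod_ring) = red_coeff x * red_coeff y"
proof -
  obtain a b a' b' where b: "\<not> int CARD('p) dvd b" "x = of_int a / of_int b"
    and b': "\<not> int CARD('p) dvd b'" "y = of_int a' / of_int b'"
    using assms unfolding p_integral_def by blast
  have bb': "\<not> int CARD('p) dvd (b * b')"
    using b b' prime_card_int[where 'a='p] prime_dvd_mult_iff by blast
  have xy: "x * y = of_int (a * a') / of_int (b * b')"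
    using b b' by simp
  with bb' show "p_integral CARD('p) (x * y)"
    unfolding p_integral_def by blast
  show "(red_coeff (x * y) :: 'p mod_ring) = red_coeff x * red_coeff y"
    unfolding xy red_coeff_frac[OF bb'] using b b' by (simp add: red_coeff_frac)
qed

lemma lookup_red_poly:
  "Poly_Mapping.lookup (red_poly f :: 'p::prime_card mod_ring mpoly) s
     = red_coeff (Poly_Mapping.lookup f s)"
  unfolding red_poly_def by transfer (auto simp: when_def red_coeff_0)

lemma red_poly_0: "(red_poly 0 :: 'p::prime_card mod_ring mpoly) = 0"
  by (rule poly_mapping_eqI) (simp add: lookup_red_poly red_coeff_0)

lemma lookup_single_mult:
  fixes h :: "'a::comm_semiring_1 mpoly"
  shows "Poly_Mapping.lookup (Poly_Mapping.single u c * h) s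
           = (if pp_dvd u s then c * Poly_Mapping.lookup h (s - u) else 0)"
proof -
  have "Poly_Mapping.lookup (Poly_Mapping.single u c * h) s
          = c * (\<Sum>q. Poly_Mapping.lookup h q when s = u + q)"
    by (simp add: lookup_mult lookup_single when_mult)
  also have "(\<Sum>q. Poly_Mapping.lookup h q when s = u + q)
               = (if pp_dvd u s then Poly_Mapping.lookup h (s - u) else 0)"
  proof (cases "pp_dvd u s")
    case True
    then obtain v where "s = u + v"
      unfolding pp_dvd_def by blast
    then have "(\<lambda>q. Poly_Mapping.lookup h q when s = u + q)
                 = (\<lambda>q. Poly_Mapping.lookup h q when q = v)"
      by (auto simp: when_def)
    with True \<open>s = u + v\<close> show ?thesis
      by simp
  next
    case False
    then show ?thesis
      by (simp add: pp_dvd_def when_def)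
  qed
  finally show ?thesis
    by simp
qed

lemma p_integral_poly_single_mult:
  assumes "p_integral CARD('p::prime_card) c" "p_integral_poly CARD('p) h"
  shows "p_integral_poly CARD('p) (Poly_Mapping.single u c * h)"
    and "(red_poly (Poly_Mapping.single u c * h) :: 'p mod_ring mpoly)
           = Poly_Mapping.single u (red_coeff c) * red_poly h"
  using assms p_integral_mult[OF assms(1)] p_integral_0 red_coeff_0
  by (auto simp: p_integral_poly_def lookup_single_mult lookup_red_poly intro!: poly_mapping_eqI)

lemma p_integral_poly_diff:
  assumes "p_integral_poly CARD('p::prime_card) f" "p_integral_poly CARD('p) g"
  shows "p_integral_poly CARD('p) (f - g)"
    and "(red_poly (f - g) :: 'p mod_ring mpoly) = red_poly f - red_poly g"
  using assms p_integral_diff[where 'p='p]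
  by (auto simp: p_integral_poly_def lookup_minus lookup_red_poly intro!: poly_mapping_eqI)

section \<open>Ideals generated by polynomials\<close>

lemma PP_add_iff: "s + t \<in> PP n \<longleftrightarrow> s \<in> PP n \<and> t \<in> PP n"
proof -
  have "Poly_Mapping.keys (s + t) = Poly_Mapping.keys s \<union> Poly_Mapping.keys t"
    by (auto simp: in_keys_iff lookup_add)
  then show ?thesis
    unfolding PP_def by blast
qed

lemma Polys_single: "u \<in> PP n \<Longrightarrow> Poly_Mapping.single u c \<in> Polys n"
  unfolding Polys_def by auto

lemma Polys_0: "0 \<in> Polys n"
  unfolding Polys_def by simp

lemma Polys_add: "f \<in> Polys n \<Longrightarrow> g \<in> Polys n \<Longrightarrow> f + g \<in> Polys n"
  unfolding Polys_def using keys_add[of f g] by blast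

lemma Polys_mult:
  "f \<in> Polys n \<Longrightarrow> g \<in> Polys n \<Longrightarrow> (f * g :: 'a::comm_semiring_0 mpoly) \<in> Polys n"
  unfolding Polys_def using keys_mult[of f g] PP_add_iff by blast

lemma ideal_gen_0: "0 \<in> ideal_gen n F"
  unfolding ideal_gen_def by (rule CollectI, rule exI[of _ "{}"]) auto

lemma ideal_gen_generator:
  "h \<in> F \<Longrightarrow> q \<in> Polys n \<Longrightarrow> q * h \<in> ideal_gen n (F :: 'a::comm_ring_1 mpoly set)"
  unfolding ideal_gen_def by (rule CollectI, rule exI[of _ "{h}"], rule exI[of _ "\<lambda>_. q"]) auto

lemma ideal_gen_add:
  assumes "x \<in> ideal_gen n F" "y \<in> ideal_gen n F"
  shows "x + y \<in> ideal_gen n (F :: 'a::comm_ring_1 mpoly set)"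
proof -
  obtain A q where A: "finite A" "A \<subseteq> F" "\<forall>g\<in>A. q g \<in> Polys n" "x = (\<Sum>g\<in>A. q g * g)"
    using assms(1) unfolding ideal_gen_def by blast
  obtain B r where B: "finite B" "B \<subseteq> F" "\<forall>g\<in>B. r g \<in> Polys n" "y = (\<Sum>g\<in>B. r g * g)"
    using assms(2) unfolding ideal_gen_def by blast
  define q' where "q' g = (if g \<in> A then q g else 0)" for g
  define r' where "r' g = (if g \<in> B then r g else 0)" for g
  have "x = (\<Sum>g\<in>A \<union> B. q' g * g)"
    unfolding A(4) q'_def by (rule sum.mono_neutral_cong_left) (use A B in auto)
  moreover have "y = (\<Sum>g\<in>A \<union> B. r' g * g)"
    unfolding B(4) r'_def by (rule sum.mono_neutral_cong_left) (use A B in auto)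
  ultimately have "x + y = (\<Sum>g\<in>A \<union> B. (q' g + r' g) * g)"
    by (simp add: distrib_right sum.distrib)
  moreover have "\<forall>g\<in>A \<union> B. q' g + r' g \<in> Polys n"
    using A B by (auto simp: q'_def r'_def intro: Polys_add Polys_0)
  ultimately show ?thesis
    unfolding ideal_gen_def using A B
    by (intro CollectI exI[of _ "A \<union> B"] exI[of _ "\<lambda>g. q' g + r' g"]) auto
qed

lemma ideal_gen_mult:
  assumes "x \<in> ideal_gen n F" "q \<in> Polys n"
  shows "q * x \<in> ideal_gen n (F :: 'a::comm_ring_1 mpoly set)"
proof -
  obtain A r where A: "finite A" "A \<subseteq> F" "\<forall>g\<in>A. r g \<in> Polys n" "x = (\<Sum>g\<in>A. r g * g)"
    using assms(1) unfolding ideal_gen_def by blast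
  have "q * x = (\<Sum>g\<in>A. (q * r g) * g)"
    using A(4) by (simp add: sum_distrib_left mult.assoc)
  moreover have "\<forall>g\<in>A. q * r g \<in> Polys n"
    using A(3) assms(2) Polys_mult by blast
  ultimately show ?thesis
    unfolding ideal_gen_def using A
    by (intro CollectI exI[of _ A] exI[of _ "\<lambda>g. q * r g"]) auto
qed

lemma ideal_gen_subset_ideal_gen:
  assumes "X \<subseteq> ideal_gen n F"
  shows "ideal_gen n X \<subseteq> ideal_gen n (F :: 'a::comm_ring_1 mpoly set)"
proof
  fix x
  assume "x \<in> ideal_gen n X"
  then obtain A q where A: "finite A" "A \<subseteq> X" "\<forall>g\<in>A. q g \<in> Polys n" "x = (\<Sum>g\<in>A. q g * g)"
    unfolding ideal_gen_def by blast
  have "(\<Sum>g\<in>A. q g * g) \<in> ideal_gen n F"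
    using A(1-3)
  proof (induction A rule: finite_induct)
    case empty
    then show ?case
      by (simp add: ideal_gen_0)
  next
    case (insert a A)
    then show ?case
      using assms by (simp add: ideal_gen_add ideal_gen_mult subset_iff)
  qed
  with A(4) show "x \<in> ideal_gen n F"
    by simp
qed

section \<open>Term orders are well-founded\<close>

lemma pp_dvdI:
  assumes "\<And>k. Poly_Mapping.lookup s k \<le> Poly_Mapping.lookup t k"
  shows "pp_dvd s t"
proof -
  have "t = s + (t - s)"
    by (rule poly_mapping_eqI) (simp add: lookup_add lookup_minus assms)
  then show ?thesis
    unfolding pp_dvd_def by blast
qed

lemma nat_seq_incseq_subseq:
  fixes a :: "nat \<Rightarrow> nat"
  obtains r where "strict_mono r" "incseq (a \<circ> r)"
proof -
  obtain r where r: "strict_mono r" "monoseq (a \<circ> r)"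
    using seq_monosub[of a] unfolding comp_def by blast
  show thesis
  proof (cases "incseq (a \<circ> r)")
    case True
    with r(1) show thesis
      by (rule that)
  next
    case False
    with r(2) have "decseq (a \<circ> r)"
      by (simp add: monoseq_iff)
    obtain N where N: "\<And>i. a (r N) \<le> a (r i)"
      using ex_has_least_nat[of "\<lambda>_. True" 0 "a \<circ> r"] by auto
    \<comment> \<open>a decreasing sequence of naturals is eventually constant\<close>
    have "a (r (i + N)) = a (r N)" for i
      using N[of "i + N"] \<open>decseq (a \<circ> r)\<close> by (simp add: decseq_def antisym)
    then have "incseq (a \<circ> (\<lambda>i. r (i + N)))"
      by (simp add: incseq_def)
    moreover have "strict_mono (\<lambda>i. r (i + N))"
      using r(1) by (simp add: strict_mono_def)
    ultimately show thesis
      using that by blast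
  qed
qed

lemma dickson_subseq:
  fixes c :: "nat \<Rightarrow> pp"
  shows "\<exists>r. strict_mono r \<and> (\<forall>k<m. incseq (\<lambda>i. Poly_Mapping.lookup (c (r i)) k))"
proof (induction m)
  case 0
  have "strict_mono (\<lambda>i::nat. i)"
    by (simp add: strict_mono_def)
  then show ?case
    by blast
next
  case (Suc m)
  then obtain r where r: "strict_mono r" "\<forall>k<m. incseq (\<lambda>i. Poly_Mapping.lookup (c (r i)) k)"
    by blast
  obtain r' where r': "strict_mono r'" "incseq ((\<lambda>i. Poly_Mapping.lookup (c (r i)) m) \<circ> r')"
    by (rule nat_seq_incseq_subseq)
  have "strict_mono (r \<circ> r')"
    using r(1) r'(1) by (simp add: strict_mono_def)
  moreover have "incseq (\<lambda>i. Poly_Mapping.lookup (c ((r \<circ> r') i)) k)" if "k < Suc m" for k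
  proof (cases "k = m")
    case True
    with r'(2) show ?thesis
      by (simp add: comp_def)
  next
    case False
    with that r(2) have "incseq (\<lambda>i. Poly_Mapping.lookup (c (r i)) k)"
      by simp
    then show ?thesis
      using r'(1) by (simp add: incseq_def strict_mono_less_eq)
  qed
  ultimately show ?case
    by blast
qed

lemma dickson:
  fixes c :: "nat \<Rightarrow> pp"
  assumes "\<And>i. c i \<in> PP n"
  obtains i j where "i < j" "pp_dvd (c i) (c j)"
proof -
  obtain r where r: "strict_mono r" "\<forall>k<n. incseq (\<lambda>i. Poly_Mapping.lookup (c (r i)) k)"
    using dickson_subseq by blast
  have "Poly_Mapping.lookup (c (r 0)) k \<le> Poly_Mapping.lookup (c (r 1)) k" for k
  proof (cases "k < n")
    case True
    with r(2) show ?thesis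
      by (simp add: incseq_def)
  next
    case False
    then have "k \<notin> Poly_Mapping.keys (c (r 0))"
      using assms unfolding PP_def by auto
    then show ?thesis
      by (simp add: in_keys_iff)
  qed
  then have "pp_dvd (c (r 0)) (c (r 1))"
    by (rule pp_dvdI)
  moreover have "r 0 < r 1"
    using r(1) by (simp add: strict_mono_def)
  ultimately show thesis
    using that by blast
qed

definition term_less :: "nat \<Rightarrow> (pp \<Rightarrow> pp \<Rightarrow> bool) \<Rightarrow> pp rel" where
  "term_less n \<sigma> = {(s, t). s \<in> PP n \<and> t \<in> PP n \<and> \<sigma> s t \<and> s \<noteq> t}"

context
  fixes n :: nat and \<sigma> :: "pp \<Rightarrow> pp \<Rightarrow> bool"
  assumes term_order: "term_order n \<sigma>"
begin

lemma term_order_refl: "s \<in> PP n \<Longrightarrow> \<sigma> s s"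
  using term_order unfolding term_order_def by blast

lemma term_order_antisym: "s \<in> PP n \<Longrightarrow> t \<in> PP n \<Longrightarrow> \<sigma> s t \<Longrightarrow> \<sigma> t s \<Longrightarrow> s = t"
  using term_order unfolding term_order_def by blast

lemma term_order_trans:
  "s \<in> PP n \<Longrightarrow> t \<in> PP n \<Longrightarrow> u \<in> PP n \<Longrightarrow> \<sigma> s t \<Longrightarrow> \<sigma> t u \<Longrightarrow> \<sigma> s u"
  using term_order unfolding term_order_def by blast

lemma term_order_total: "s \<in> PP n \<Longrightarrow> t \<in> PP n \<Longrightarrow> \<sigma> s t \<or> \<sigma> t s"
  using term_order unfolding term_order_def by blast

lemma term_order_add:
  "s \<in> PP n \<Longrightarrow> t \<in> PP n \<Longrightarrow> u \<in> PP n \<Longrightarrow> \<sigma> s t \<Longrightarrow> \<sigma> (s + u) (t + u)"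
  using term_order unfolding term_order_def by blast

lemma term_order_pp_dvd:
  assumes "t \<in> PP n" "pp_dvd s t"
  shows "\<sigma> s t"
proof -
  obtain u where t: "t = s + u"
    using assms(2) unfolding pp_dvd_def by blast
  with assms(1) have "s \<in> PP n" "u \<in> PP n"
    by (simp_all add: PP_add_iff)
  moreover have "0 \<in> PP n"
    unfolding PP_def by simp
  moreover have "\<sigma> 0 u"
    using term_order \<open>u \<in> PP n\<close> unfolding term_order_def by blast
  ultimately have "\<sigma> (0 + s) (u + s)"
    using term_order_add by blast
  with t show ?thesis
    by (simp add: add.commute)
qed

lemma term_order_greatest_exists:
  assumes "finite A" "A \<noteq> {}" "A \<subseteq> PP n"
  shows "\<exists>m\<in>A. \<forall>s\<in>A. \<sigma> s m"
  using assms
proof (induction A rule: finite_ne_induct)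
  case (singleton x)
  then show ?case
    using term_order_refl by auto
next
  case (insert x A)
  then obtain m where m: "m \<in> A" "\<forall>s\<in>A. \<sigma> s m"
    by auto
  have x: "x \<in> PP n" and A: "A \<subseteq> PP n"
    using insert.prems by auto
  with m(1) have "m \<in> PP n"
    by auto
  show ?case
  proof (cases "\<sigma> x m")
    case True
    with m show ?thesis
      by auto
  next
    case False
    with term_order_total[OF x \<open>m \<in> PP n\<close>] have "\<sigma> m x"
      by blast
    have "\<sigma> s x" if "s \<in> A" for s
      using term_order_trans[of s m x] that m(2) A x \<open>m \<in> PP n\<close> \<open>\<sigma> m x\<close> by blast
    with term_order_refl[OF x] show ?thesis
      by auto
  qed
qed

lemma lterm_greatest:
  assumes "Poly_Mapping.keys f \<subseteq> PP n" "f \<noteq> 0"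
  shows lterm_in_keys: "lterm \<sigma> f \<in> Poly_Mapping.keys f"
    and lterm_max: "s \<in> Poly_Mapping.keys f \<Longrightarrow> \<sigma> s (lterm \<sigma> f)"
proof -
  obtain m where m: "m \<in> Poly_Mapping.keys f" "\<forall>s\<in>Poly_Mapping.keys f. \<sigma> s m"
    using term_order_greatest_exists[OF finite_keys _ assms(1)] assms(2) by auto
  have "lterm \<sigma> f = m"
    unfolding lterm_def
  proof (rule the_equality)
    fix t
    assume "t \<in> Poly_Mapping.keys f \<and> (\<forall>s\<in>Poly_Mapping.keys f. \<sigma> s t)"
    with m assms(1) show "t = m"
      using term_order_antisym by blast
  qed (use m in blast)
  with m show "lterm \<sigma> f \<in> Poly_Mapping.keys f" "s \<in> Poly_Mapping.keys f \<Longrightarrow> \<sigma> s (lterm \<sigma> f)"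
    by auto
qed

lemma trans_term_less: "trans (term_less n \<sigma>)"
proof (rule transI)
  fix s t u
  assume "(s, t) \<in> term_less n \<sigma>" "(t, u) \<in> term_less n \<sigma>"
  then have PP: "s \<in> PP n" "t \<in> PP n" "u \<in> PP n" and "\<sigma> s t" "\<sigma> t u" "s \<noteq> t"
    unfolding term_less_def by auto
  then have "\<sigma> s u"
    using term_order_trans by blast
  moreover have "s \<noteq> u"
    using PP \<open>\<sigma> s t\<close> \<open>\<sigma> t u\<close> \<open>s \<noteq> t\<close> term_order_antisym by blast
  ultimately show "(s, u) \<in> term_less n \<sigma>"
    unfolding term_less_def using PP by simp
qed

lemma wf_term_less: "wf (term_less n \<sigma>)"
  unfolding wf_iff_no_infinite_down_chain
proof
  assume "\<exists>c. \<forall>i. (c (Suc i), c i) \<in> term_less n \<sigma>"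
  then obtain c where c: "\<And>i. (c (Suc i), c i) \<in> term_less n \<sigma>"
    by blast
  then have PP: "\<And>i. c i \<in> PP n"
    unfolding term_less_def by blast
  have descending: "(c j, c i) \<in> term_less n \<sigma>" if "i < j" for i j
    using that
  proof (induction j)
    case (Suc j)
    show ?case
    proof (cases "i = j")
      case True
      with c show ?thesis
        by simp
    next
      case False
      with Suc have "(c j, c i) \<in> term_less n \<sigma>"
        by simp
      with c[of j] trans_term_less show ?thesis
        by (meson transD)
    qed
  qed simp
  obtain i j where "i < j" and dvd: "pp_dvd (c i) (c j)"
    using dickson[of c n] PP by blast
  \<comment> \<open>a term order extends divisibility, so it cannot strictly decrease along a divisibility\<close>
  have "\<sigma> (c i) (c j)"
    by (rule term_order_pp_dvd[OF PP dvd])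
  moreover have "\<sigma> (c j) (c i)" "c j \<noteq> c i"
    using descending[OF \<open>i < j\<close>] unfolding term_less_def by simp_all
  ultimately show False
    using term_order_antisym[OF PP PP] by blast
qed

end

section \<open>Reduction modulo a Groebner basis\<close>

lemma lterm_cancel:
  fixes f h :: "'a::comm_ring_1 mpoly"
  assumes \<sigma>: "term_order n \<sigma>"
    and f: "Poly_Mapping.keys f \<subseteq> PP n" "f \<noteq> 0"
    and h: "Poly_Mapping.keys h \<subseteq> PP n" "h \<noteq> 0" "lcoeff \<sigma> h = 1"
    and t: "lterm \<sigma> f = lterm \<sigma> h + u"
    and s: "s \<in> Poly_Mapping.keys (f - Poly_Mapping.single u (lcoeff \<sigma> f) * h)"
  shows "(s, lterm \<sigma> f) \<in> term_less n \<sigma>"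
proof -
  let ?t = "lterm \<sigma> f"
  have "?t \<in> PP n"
    using lterm_in_keys[OF \<sigma> f] f(1) by blast
  with t have "lterm \<sigma> h \<in> PP n" "u \<in> PP n"
    by (simp_all add: PP_add_iff)
  have lookup: "Poly_Mapping.lookup (f - Poly_Mapping.single u (lcoeff \<sigma> f) * h) s
      = Poly_Mapping.lookup f s
        - (if pp_dvd u s then lcoeff \<sigma> f * Poly_Mapping.lookup h (s - u) else 0)"
    by (simp add: lookup_minus lookup_single_mult)
  have "s \<in> PP n \<and> \<sigma> s ?t"
  proof (cases "s \<in> Poly_Mapping.keys f")
    case True
    with f(1) lterm_max[OF \<sigma> f True] show ?thesis
      by blast
  next
    case False
    with s lookup have "pp_dvd u s" "Poly_Mapping.lookup h (s - u) \<noteq> 0"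
      by (auto simp: in_keys_iff split: if_splits)
    then obtain v where s_eq: "s = v + u" and v: "v \<in> Poly_Mapping.keys h"
      by (auto simp: pp_dvd_def in_keys_iff add.commute)
    with h(1) have "v \<in> PP n"
      by blast
    have "\<sigma> v (lterm \<sigma> h)"
      using lterm_max[OF \<sigma> h(1,2) v] .
    then have "\<sigma> s ?t"
      unfolding s_eq t
      using term_order_add[OF \<sigma> \<open>v \<in> PP n\<close> \<open>lterm \<sigma> h \<in> PP n\<close> \<open>u \<in> PP n\<close>] by blast
    moreover have "s \<in> PP n"
      unfolding s_eq using \<open>v \<in> PP n\<close> \<open>u \<in> PP n\<close> by (simp add: PP_add_iff)
    ultimately show ?thesis
      by blast
  qed
  moreover have "s \<noteq> ?t"
  proof
    assume "s = ?t"
    with t have "s = u + lterm \<sigma> h"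
      by (simp add: add.commute)
    then have "pp_dvd u s" "s - u = lterm \<sigma> h"
      unfolding pp_dvd_def by simp_all
    with lookup h(3) have "Poly_Mapping.lookup (f - Poly_Mapping.single u (lcoeff \<sigma> f) * h) s = 0"
      by (simp add: lcoeff_def \<open>s = ?t\<close>)
    with s show False
      by (simp add: in_keys_iff)
  qed
  ultimately show ?thesis
    using \<open>?t \<in> PP n\<close> unfolding term_less_def by simp
qed

lemma reduced_GB_reduction_step:
  fixes I G :: "'a::field mpoly set"
  assumes \<sigma>: "term_order n \<sigma>" and I: "is_ideal n I" and G: "reduced_GB n \<sigma> I G"
    and f: "f \<in> I" "f \<noteq> 0"
  obtains h u where "h \<in> G" "u \<in> PP n"
    and "f - Poly_Mapping.single u (lcoeff \<sigma> f) * h \<in> I"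
    and "\<And>s. s \<in> Poly_Mapping.keys (f - Poly_Mapping.single u (lcoeff \<sigma> f) * h)
           \<Longrightarrow> (s, lterm \<sigma> f) \<in> term_less n \<sigma>"
proof -
  have keys_I: "Poly_Mapping.keys g \<subseteq> PP n" if "g \<in> I" for g
    using I that unfolding is_ideal_def Polys_def by auto
  obtain h where "h \<in> G" "pp_dvd (lterm \<sigma> h) (lterm \<sigma> f)"
    using G f unfolding reduced_GB_def by blast
  then obtain u where t: "lterm \<sigma> f = lterm \<sigma> h + u"
    unfolding pp_dvd_def by blast
  have "h \<in> I" "h \<noteq> 0" "lcoeff \<sigma> h = 1"
    using G \<open>h \<in> G\<close> unfolding reduced_GB_def by auto
  have "lterm \<sigma> f \<in> PP n"
    using lterm_in_keys[OF \<sigma> keys_I[OF f(1)] f(2)] keys_I[OF f(1)] by blast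
  with t have "u \<in> PP n"
    by (simp add: PP_add_iff)
  then have "Poly_Mapping.single u (- lcoeff \<sigma> f) * h \<in> I"
    using I \<open>h \<in> I\<close> Polys_single unfolding is_ideal_def by blast
  with f(1) I have "f - Poly_Mapping.single u (lcoeff \<sigma> f) * h \<in> I"
    unfolding is_ideal_def by (metis diff_conv_add_uminus minus_mult_left single_uminus)
  moreover note lterm_cancel[OF \<sigma> keys_I[OF f(1)] f(2) keys_I[OF \<open>h \<in> I\<close>]
      \<open>h \<noteq> 0\<close> \<open>lcoeff \<sigma> h = 1\<close> t]
  ultimately show thesis
    using that \<open>h \<in> G\<close> \<open>u \<in> PP n\<close> by blast
qed

lemma red_poly_mem_ideal_gen_reduced_GB:
  assumes \<sigma>: "term_order n \<sigma>" and I: "is_ideal n I" and G: "reduced_GB n \<sigma> I G"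
    and G_integral: "\<And>g. g \<in> G \<Longrightarrow> p_integral_poly CARD('p::prime_card) g"
    and "f \<in> I" "p_integral_poly CARD('p) f"
  shows "(red_poly f :: 'p mod_ring mpoly) \<in> ideal_gen n (red_poly ` G)"
proof -
  let ?J = "ideal_gen n (red_poly ` G :: 'p mod_ring mpoly set)"
  have "red_poly f \<in> ?J"
    if "f \<in> I" "p_integral_poly CARD('p) f" "f \<noteq> 0" "lterm \<sigma> f = t" for f t
    using that
  proof (induction t arbitrary: f rule: wf_induct_rule[OF wf_term_less[OF \<sigma>], case_names less])
    case (less t f)
    obtain h u where "h \<in> G" "u \<in> PP n"
      and f'_I: "f - Poly_Mapping.single u (lcoeff \<sigma> f) * h \<in> I"
      and f'_below: "\<And>s. s \<in> Poly_Mapping.keys (f - Poly_Mapping.single u (lcoeff \<sigma> f) * h)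
                       \<Longrightarrow> (s, lterm \<sigma> f) \<in> term_less n \<sigma>"
      using reduced_GB_reduction_step[OF \<sigma> I G less.prems(1,3)] by blast
    define f' where "f' = f - Poly_Mapping.single u (lcoeff \<sigma> f) * h"
    have "p_integral CARD('p) (lcoeff \<sigma> f)"
      using less.prems(2) unfolding p_integral_poly_def lcoeff_def by blast
    note single_mult = p_integral_poly_single_mult[OF this G_integral[OF \<open>h \<in> G\<close>], of u]
    have "p_integral_poly CARD('p) f'"
      and red_f': "(red_poly f' :: 'p mod_ring mpoly)
                     = red_poly f - Poly_Mapping.single u (red_coeff (lcoeff \<sigma> f)) * red_poly h"
      unfolding f'_def using p_integral_poly_diff[OF less.prems(2) single_mult(1)] single_mult(2)
      by simp_all
    have "Poly_Mapping.single u (red_coeff (lcoeff \<sigma> f)) * red_poly h \<in> ?J"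
      using \<open>h \<in> G\<close> \<open>u \<in> PP n\<close> by (intro ideal_gen_generator Polys_single) auto
    moreover have "red_poly f' \<in> ?J"
    proof (cases "f' = 0")
      case True
      then show ?thesis
        by (simp add: red_poly_0 ideal_gen_0)
    next
      case False
      have "Poly_Mapping.keys f' \<subseteq> PP n"
        using I f'_I unfolding f'_def is_ideal_def Polys_def by auto
      with False have "(lterm \<sigma> f', t) \<in> term_less n \<sigma>"
        using f'_below lterm_in_keys[OF \<sigma>] less.prems(4) unfolding f'_def by blast
      with less.IH f'_I \<open>p_integral_poly CARD('p) f'\<close> False show ?thesis
        unfolding f'_def by blast
    qed
    ultimately show ?case
      using red_f' ideal_gen_add by (metis diff_add_cancel)
  qed
  with assms(5,6) show ?thesis
    by (cases "f = 0") (auto simp: red_poly_0 ideal_gen_0)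
qed

lemma ideal_gen_red_poly_subset:
  assumes "term_order n \<sigma>" "is_ideal n I" "reduced_GB n \<sigma> I G"
    and "\<And>g. g \<in> G \<Longrightarrow> p_integral_poly CARD('p::prime_card) g"
    and "F \<subseteq> I" "\<And>f. f \<in> F \<Longrightarrow> p_integral_poly CARD('p) f"
  shows "ideal_gen n (red_poly ` F :: 'p mod_ring mpoly set) \<subseteq> ideal_gen n (red_poly ` G)"
  using assms by (intro ideal_gen_subset_ideal_gen) (auto intro: red_poly_mem_ideal_gen_reduced_GB)

lemma p_integral_poly_of_not_dvd_den_set:
  assumes "\<not> CARD('p::prime_card) dvd den_set G" "g \<in> G"
  shows "p_integral_poly CARD('p) g"
  unfolding p_integral_poly_def
proof
  fix s
  show "p_integral CARD('p) (Poly_Mapping.lookup g s)"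
  proof (cases "s \<in> Poly_Mapping.keys g")
    case False
    then show ?thesis
      using p_integral_0[where 'p='p] by (simp add: in_keys_iff)
  next
    case True
    obtain a b where q: "quotient_of (Poly_Mapping.lookup g s) = (a, b)"
      by fastforce
    have "nat b dvd den g"
      unfolding den_def by (rule dvd_Lcm) (use True q in force)
    also have "den g dvd den_set G"
      unfolding den_set_def by (rule dvd_Lcm) (use assms(2) in blast)
    finally have "\<not> CARD('p) dvd nat b"
      using assms(1) dvd_trans by blast
    then have "\<not> int CARD('p) dvd b"
      using quotient_of_denom_pos[OF q] by (metis int_dvd_int_iff nat_0_le order_less_imp_le)
    with quotient_of_div[OF q] show ?thesis
      unfolding p_integral_def by blast
  qed
qed

lemma den_set_dvd_univ_den:
  "term_order n \<sigma> \<Longrightarrow> reduced_GB n \<sigma> I G \<Longrightarrow> den_set G dvd univ_den n I"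
  unfolding univ_den_def by (rule dvd_Lcm) blast

theorem proposition2p14:
  fixes n :: nat and I :: "rat mpoly set"
    and \<sigma> \<tau> :: "pp \<Rightarrow> pp \<Rightarrow> bool"
    and G H :: "rat mpoly set"
  assumes "is_ideal n I"
    and "\<not> CARD('p::prime_card) dvd univ_den n I"
    and "term_order n \<sigma>" and "reduced_GB n \<sigma> I G"
    and "term_order n \<tau>" and "reduced_GB n \<tau> I H"
  shows "ideal_gen n ((red_poly :: rat mpoly \<Rightarrow> 'p mod_ring mpoly) ` G)
       = ideal_gen n ((red_poly :: rat mpoly \<Rightarrow> 'p mod_ring mpoly) ` H)"
proof -
  have "\<not> CARD('p) dvd den_set G" "\<not> CARD('p) dvd den_set H"
    using assms den_set_dvd_univ_den dvd_trans by blast+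
  then have "p_integral_poly CARD('p) g" if "g \<in> G \<union> H" for g
    using that p_integral_poly_of_not_dvd_den_set by blast
  moreover have "G \<subseteq> I" "H \<subseteq> I"
    using assms(4,6) unfolding reduced_GB_def by auto
  ultimately show ?thesis
    using ideal_gen_red_poly_subset[OF assms(3,1,4), of H]
      ideal_gen_red_poly_subset[OF assms(5,1,6), of G]
    by blast
qed

end
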